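(* Under Assumptions 1, 2, 3 and 5 (with $\|\cdot\|_*=\|\cdot\|_2$), with the RSA iterates, stepsizes and $g^N$ as in the context, define for $\Theta>0$ $$a(\Theta,N)=\frac{\Theta M_1}{\sqrt N},\quad b(\Theta,X,N)=\frac{K_1(X)+\Theta(K_2(X)-M_1)}{\sqrt N},$$ $\mathrm{Up}_1(\Theta_1,N)=g^N+a(\Theta_1,N)$ and $\mathrm{Low}_1(\Theta_2,\Theta_3,N)=g^N-b(\Theta_2,X,N)-a(\Theta_3,N)$. Then for all $\Theta_1,\Theta_2,\Theta_3>0$, $$\mathbb P\Big(f(x_* )\in[\mathrm{Low}_1(\Theta_2,\Theta_3,N),\mathrm{Up}_1(\Theta_1,N)]\Big)\ge1-e^{-\Theta_1^2/4}-e^{1-\Theta_2^2}-e^{-\Theta_2^2/4}-e^{-\Theta_3^2/4}.$$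
   Context: Setting: $E=\mathbb R^n$, $\|\cdot\|=\|\cdot\|_*=\|\cdot\|_2$; $X$ nonempty closed bounded convex; $f(x)=\mathbb E[g(x,\xi)]$ convex Lipschitz with minimizer $x_*$ on $X$, $g$ Borel, convex in $x$; $\xi_1,\xi_2,\dots$ i.i.d. copies of $\xi$; oracle returns $g(x,\xi_t)$ and measurable $G(x,\xi_t)\in\partial_xg(x,\xi_t)$; $f'(x)=\mathbb E[G(x,\xi)]$, $\delta=g-f$, $\Delta=G-f'$. RSA: $x_1\in X$, $x_{t+1}=\Pi_X(x_t-\gamma G(x_t,\xi_t))$, $t=1,\dots,N-1$, with $\gamma=D_X/(\sqrt{2(M_2^2+L^2)}\sqrt N)$, $D_X=\max_{x\in X}\|x-x_1\|_2$; $g^N=\frac1N\sum_{\tau=1}^Ng(x_\tau,\xi_\tau)$. $K_1(X)=\frac{D_X(M_2^2+2L^2)}{\sqrt{2(M_2^2+L^2)}}$, $K_2(X)=\frac{D_XM_2^2}{\sqrt{2(M_2^2+L^2)}}+2D_XM_2+M_1$. Assumption 1: $\|f'(x)\|_*\le L$ on $X$. Assumption 2: $f=\mathbb E g$, $\mathbb E G(x,\xi)\in\partial f(x)$. Assumption 3: $\mathbb E\delta^2\le M_1^2$, $\mathbb E\|\Delta\|_*^2\le M_2^2$ on $X$. Assumption 5: $\mathbb E[\exp\{\delta^2(x,\xi)/M_1^2\}]\le e$ and $\|\Delta(x,\xi)\|_*\le M_2$ a.s. for all $x\in X$. *)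

theory Defs
  imports "HOL-Probability.Probability"
begin

definition is_subgradient :: "'a::euclidean_space set \<Rightarrow> ('a \<Rightarrow> real) \<Rightarrow> 'a \<Rightarrow> 'a \<Rightarrow> bool" where
  "is_subgradient X \<phi> x v \<longleftrightarrow> (\<forall>y\<in>X. \<phi> y \<ge> \<phi> x + inner v (y - x))"

(* RSA iterates, 0-based: rsa_iter .. k \<omega> is x_{k+1}; xi k is \<xi>_{k+1}.
   x_1 = x1,  x_{t+1} = Pi_X (x_t - \<gamma> G(x_t, \<xi>_t)). *)
fun rsa_iter :: "'a::euclidean_space set \<Rightarrow> ('a \<Rightarrow> 'b \<Rightarrow> 'a) \<Rightarrow> real \<Rightarrow> 'a \<Rightarrow> (nat \<Rightarrow> 'w \<Rightarrow> 'b)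
                  \<Rightarrow> nat \<Rightarrow> 'w \<Rightarrow> 'a" where
  "rsa_iter X G \<gamma> x1 xi 0 \<omega> = x1"
| "rsa_iter X G \<gamma> x1 xi (Suc k) \<omega> =
     closest_point X (rsa_iter X G \<gamma> x1 xi k \<omega> - \<gamma> *\<^sub>R G (rsa_iter X G \<gamma> x1 xi k \<omega>) (xi k \<omega>))"

definition diam_from :: "'a::euclidean_space set \<Rightarrow> 'a \<Rightarrow> real" where
  "diam_from X x1 = Sup ((\<lambda>x. norm (x - x1)) ` X)"

definition rsa_step :: "real \<Rightarrow> real \<Rightarrow> real \<Rightarrow> nat \<Rightarrow> real" where
  "rsa_step DX M2 L N = DX / (sqrt (2 * (M2\<^sup>2 + L\<^sup>2)) * sqrt (real N))"

definition gN :: "'a::euclidean_space set \<Rightarrow> ('a \<Rightarrow> 'b \<Rightarrow> real) \<Rightarrow> ('a \<Rightarrow> 'b \<Rightarrow> 'a) \<Rightarrow> real \<Rightarrow> 'a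
                  \<Rightarrow> (nat \<Rightarrow> 'w \<Rightarrow> 'b) \<Rightarrow> nat \<Rightarrow> 'w \<Rightarrow> real" where
  "gN X g G \<gamma> x1 xi N \<omega> = (\<Sum>k<N. g (rsa_iter X G \<gamma> x1 xi k \<omega>) (xi k \<omega>)) / real N"

definition K1 :: "real \<Rightarrow> real \<Rightarrow> real \<Rightarrow> real" where
  "K1 DX M2 L = DX * (M2\<^sup>2 + 2 * L\<^sup>2) / sqrt (2 * (M2\<^sup>2 + L\<^sup>2))"

definition K2 :: "real \<Rightarrow> real \<Rightarrow> real \<Rightarrow> real \<Rightarrow> real" where
  "K2 DX M1 M2 L = DX * M2\<^sup>2 / sqrt (2 * (M2\<^sup>2 + L\<^sup>2)) + 2 * DX * M2 + M1"

definition a_bnd :: "real \<Rightarrow> real \<Rightarrow> nat \<Rightarrow> real" where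
  "a_bnd \<Theta> M1 N = \<Theta> * M1 / sqrt (real N)"

definition b_bnd :: "real \<Rightarrow> real \<Rightarrow> real \<Rightarrow> real \<Rightarrow> real \<Rightarrow> nat \<Rightarrow> real" where
  "b_bnd \<Theta> DX M1 M2 L N = (K1 DX M2 L + \<Theta> * (K2 DX M1 M2 L - M1)) / sqrt (real N)"

end

theory Submission
  imports Defs
begin

(* By the i.i.d. assumption the event only depends on the law of (xi_0, ..., xi_{N-1}),
   so everything can be computed on the canonical product space Omega = P^N, where the
   iterates x_k become functions of the sample sequence y depending only on y_0 .. y_{k-1}.
   Three martingale-difference sums appear: the value noise g(x_k, y_k) - f(x_k) (summed with
   either sign) and the subgradient noise <f'(x_k) - G(x_k, y_k), x_k - x_star>.  Assumption 5
   makes them sub-Gaussian (the second one because it is bounded by 2 D_X M_2), so an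
   Azuma/Chernoff argument bounds each tail by exp(-Theta^2/4).  Outside these three events the
   classical regret bound for projected subgradient steps with the constant stepsize gives
   g^N - b - a_3 <= f(x_star) <= g^N + a_1, and a union bound yields the claim (for Theta_2 < 1 the
   right-hand side is negative because exp(1 - Theta_2^2) > 1). *)

subsection \<open>Scalar inequalities for the exponential\<close>

text \<open>The elementary bound behind the sub-Gaussian estimate for small parameters:
  \<open>exp x \<le> x + exp (x\<^sup>2)\<close>, whose linear term integrates to zero for centred variables.\<close>

lemma exp_le_x_plus_exp_sq: "exp (x::real) \<le> x + exp (x\<^sup>2)"
proof (cases "x \<ge> 1")
  case True
  then have "x \<le> x\<^sup>2" by (simp add: power2_eq_square)
  then show ?thesis using True by (meson add_increasing exp_le_cancel_iff order_trans zero_le_one)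
next
  case False
  have sq: "1 + x\<^sup>2 \<le> exp (x\<^sup>2)" by simp
  show ?thesis
  proof (cases "x \<ge> 0")
    case True
    then show ?thesis using exp_bound[of x] False sq by linarith
  next
    case neg: False
    have taylor: "1 + (-x) + (-x)\<^sup>2 / 2 \<le> exp (-x)"
      by (rule exp_lower_Taylor_quadratic) (use neg in auto)
    have pos: "0 < 1 + (-x) + (-x)\<^sup>2 / 2" using neg by (simp add: add_pos_nonneg)
    have prod_ge_1: "1 \<le> (1 + x + x\<^sup>2) * (1 + (-x) + (-x)\<^sup>2 / 2)"
    proof -
      have "(1 + x + x\<^sup>2) * (1 + (-x) + (-x)\<^sup>2 / 2) = 1 + x\<^sup>2/2 - x^3/2 + x^4/2"
        by (simp add: algebra_simps power2_eq_square power3_eq_cube power4_eq_xxxx divide_simps)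
      moreover have "x^3 \<le> 0" using neg mult_nonpos_nonneg[of x "x*x"] by (simp add: power3_eq_cube)
      moreover have "0 \<le> x^4" by (simp add: zero_le_even_power)
      ultimately show ?thesis using zero_le_power2[of x] by linarith
    qed
    have "exp x = 1 / exp (-x)" by (simp add: exp_minus field_simps)
    also have "\<dots> \<le> 1 / (1 + (-x) + (-x)\<^sup>2 / 2)" using taylor pos by (intro divide_left_mono) auto
    also have "\<dots> \<le> 1 + x + x\<^sup>2" using prod_ge_1 pos by (simp add: divide_le_eq)
    finally show ?thesis using sq by linarith
  qed
qed

text \<open>Convexity of \<open>exp\<close> between \<open>0\<close> and \<open>w - 1\<close>; it lets us lower the power \<open>u \<le> 1\<close>
  in an exponential moment bound (a Jensen-type step).\<close>

lemma exp_mult_le_interpolation: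
  fixes u w :: real
  assumes "0 \<le> u" "u \<le> 1"
  shows "exp (u * w) \<le> exp u * (1 - u) + u * exp (u - 1) * exp w"
proof -
  have "exp ((1 - u) *\<^sub>R 0 + u *\<^sub>R (w - 1)) \<le> (1 - u) * exp 0 + u * exp (w - 1)"
    using convex_onD[OF exp_convex, of u 0 "w - 1"] assms by simp
  then have "exp u * exp (u * (w - 1)) \<le> exp u * ((1 - u) + u * exp (w - 1))"
    by (intro mult_left_mono) auto
  moreover have "exp u * exp (u * (w - 1)) = exp (u * w)" by (simp add: exp_add[symmetric] algebra_simps)
  moreover have "exp u * exp (w - 1) = exp (u - 1) * exp w" by (simp add: exp_add[symmetric] algebra_simps)
  ultimately show ?thesis by (simp add: algebra_simps)
qed

subsection \<open>Sub-Gaussian moment generating functions\<close>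

lemma orlicz_power_bound:
  fixes P :: "'b measure" and h :: "'b \<Rightarrow> real"
  assumes P: "prob_space P" and hm: "h \<in> borel_measurable P" and \<sigma>: "\<sigma> > 0"
    and orlicz: "(\<integral>\<^sup>+ s. ennreal (exp ((h s)\<^sup>2 / \<sigma>\<^sup>2)) \<partial>P) \<le> ennreal (exp 1)"
    and u: "0 \<le> u" "u \<le> 1"
  shows "integrable P (\<lambda>s. exp (u * ((h s)\<^sup>2 / \<sigma>\<^sup>2)))"
    and "(\<integral>s. exp (u * ((h s)\<^sup>2 / \<sigma>\<^sup>2)) \<partial>P) \<le> exp u"
proof -
  interpret prob_space P by (rule P)
  define W where "W s = exp ((h s)\<^sup>2 / \<sigma>\<^sup>2)" for s
  have W_meas: "W \<in> borel_measurable P" unfolding W_def using hm by measurable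
  have W_int: "integrable P W"
    by (rule integrableI_bounded[OF W_meas]) (use orlicz in \<open>auto simp: W_def intro: le_less_trans\<close>)
  have "ennreal (integral\<^sup>L P W) \<le> ennreal (exp 1)"
    using orlicz W_int by (subst nn_integral_eq_integral[symmetric]) (auto simp: W_def)
  then have W_le: "integral\<^sup>L P W \<le> exp 1" by (simp add: ennreal_le_iff2)
  have bnd: "exp (u * ((h s)\<^sup>2 / \<sigma>\<^sup>2)) \<le> exp u * (1 - u) + u * exp (u - 1) * W s" for s
    unfolding W_def by (rule exp_mult_le_interpolation[OF u])
  have B_int: "integrable P (\<lambda>s. exp u * (1 - u) + u * exp (u - 1) * W s)"
    using W_int by auto
  show I: "integrable P (\<lambda>s. exp (u * ((h s)\<^sup>2 / \<sigma>\<^sup>2)))"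
    by (rule Bochner_Integration.integrable_bound[OF B_int])
       (use hm bnd u in \<open>auto simp: W_def intro: order.trans[OF _ abs_ge_self]\<close>)
  have "(\<integral>s. exp (u * ((h s)\<^sup>2 / \<sigma>\<^sup>2)) \<partial>P) \<le> (\<integral>s. exp u * (1 - u) + u * exp (u - 1) * W s \<partial>P)"
    by (rule Bochner_Integration.integral_mono[OF I B_int]) (rule bnd)
  also have "\<dots> = exp u * (1 - u) + u * exp (u - 1) * integral\<^sup>L P W"
    using W_int by (simp add: prob_space)
  also have "\<dots> \<le> exp u * (1 - u) + u * exp (u - 1) * exp 1"
    using W_le u by (intro add_left_mono mult_left_mono) auto
  also have "\<dots> = exp u"
    by (simp add: algebra_simps exp_add[symmetric])
  finally show "(\<integral>s. exp (u * ((h s)\<^sup>2 / \<sigma>\<^sup>2)) \<partial>P) \<le> exp u" .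
qed

text \<open>A centred variable with \<open>E exp(h\<^sup>2/\<sigma>\<^sup>2) \<le> e\<close> has moment generating function at most
  \<open>exp(t\<^sup>2 \<sigma>\<^sup>2)\<close>; small \<open>|t|\<close> use the bound above with \<open>u = t\<^sup>2\<sigma>\<^sup>2\<close>, large \<open>|t|\<close> use
  \<open>t h \<le> t\<^sup>2\<sigma>\<^sup>2/2 + h\<^sup>2/(2\<sigma>\<^sup>2)\<close>.\<close>

lemma subgaussian_mgf:
  fixes P :: "'b measure" and h :: "'b \<Rightarrow> real"
  assumes P: "prob_space P" and hm: "h \<in> borel_measurable P" and hi: "integrable P h"
    and h0: "integral\<^sup>L P h = 0" and \<sigma>: "\<sigma> > 0"
    and orlicz: "(\<integral>\<^sup>+ s. ennreal (exp ((h s)\<^sup>2 / \<sigma>\<^sup>2)) \<partial>P) \<le> ennreal (exp 1)"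
  shows "(\<integral>\<^sup>+ s. ennreal (exp (t * h s)) \<partial>P) \<le> ennreal (exp (t\<^sup>2 * \<sigma>\<^sup>2))"
proof -
  interpret prob_space P by (rule P)
  note orlicz_power = orlicz_power_bound[OF P hm \<sigma> orlicz]
  have main: "integrable P (\<lambda>s. exp (t * h s)) \<and> (\<integral>s. exp (t * h s) \<partial>P) \<le> exp (t\<^sup>2 * \<sigma>\<^sup>2)"
  proof (cases "t\<^sup>2 * \<sigma>\<^sup>2 \<le> 1")
    case True
    define u where "u = t\<^sup>2 * \<sigma>\<^sup>2"
    have u: "0 \<le> u" "u \<le> 1" using True by (auto simp: u_def)
    have eq: "u * ((h s)\<^sup>2 / \<sigma>\<^sup>2) = (t * h s)\<^sup>2" for s
      using \<sigma> by (simp add: u_def power_mult_distrib field_simps)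
    note Iu = orlicz_power[OF u]
    have B_int: "integrable P (\<lambda>s. t * h s + exp (u * ((h s)\<^sup>2 / \<sigma>\<^sup>2)))"
      using Iu hi by auto
    have bnd: "exp (t * h s) \<le> t * h s + exp (u * ((h s)\<^sup>2 / \<sigma>\<^sup>2))" for s
      unfolding eq by (rule exp_le_x_plus_exp_sq)
    have I: "integrable P (\<lambda>s. exp (t * h s))"
      by (rule Bochner_Integration.integrable_bound[OF B_int])
         (use hm bnd in \<open>auto intro: order.trans[OF _ abs_ge_self]\<close>)
    have "(\<integral>s. exp (t * h s) \<partial>P) \<le> (\<integral>s. t * h s + exp (u * ((h s)\<^sup>2 / \<sigma>\<^sup>2)) \<partial>P)"
      by (rule Bochner_Integration.integral_mono[OF I B_int]) (rule bnd)
    also have "\<dots> = t * integral\<^sup>L P h + (\<integral>s. exp (u * ((h s)\<^sup>2 / \<sigma>\<^sup>2)) \<partial>P)"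
      using Iu hi by simp
    also have "\<dots> \<le> exp u" using Iu h0 by simp
    finally show ?thesis using I by (simp add: u_def)
  next
    case False
    note Ihalf = orlicz_power[of "1/2"]
    have B_int: "integrable P (\<lambda>s. exp (t\<^sup>2 * \<sigma>\<^sup>2 / 2) * exp (1/2 * ((h s)\<^sup>2 / \<sigma>\<^sup>2)))"
      using Ihalf by auto
    have bnd: "exp (t * h s) \<le> exp (t\<^sup>2 * \<sigma>\<^sup>2 / 2) * exp (1/2 * ((h s)\<^sup>2 / \<sigma>\<^sup>2))" for s
    proof -
      have "0 \<le> (t * \<sigma> - h s / \<sigma>)\<^sup>2" by simp
      then have "t * h s \<le> t\<^sup>2 * \<sigma>\<^sup>2 / 2 + 1/2 * ((h s)\<^sup>2 / \<sigma>\<^sup>2)"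
        using \<sigma> by (simp add: power2_eq_square field_simps)
      then show ?thesis by (simp add: exp_add[symmetric])
    qed
    have I: "integrable P (\<lambda>s. exp (t * h s))"
      by (rule Bochner_Integration.integrable_bound[OF B_int]) (use hm bnd in auto)
    have "(\<integral>s. exp (t * h s) \<partial>P) \<le> (\<integral>s. exp (t\<^sup>2 * \<sigma>\<^sup>2 / 2) * exp (1/2 * ((h s)\<^sup>2 / \<sigma>\<^sup>2)) \<partial>P)"
      by (rule Bochner_Integration.integral_mono[OF I B_int]) (rule bnd)
    also have "\<dots> \<le> exp (t\<^sup>2 * \<sigma>\<^sup>2 / 2) * exp (1/2)"
      using Ihalf by (simp add: mult_left_mono)
    also have "\<dots> \<le> exp (t\<^sup>2 * \<sigma>\<^sup>2)"
      using False by (simp add: exp_add[symmetric])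
    finally show ?thesis using I by simp
  qed
  then show ?thesis
    by (subst nn_integral_eq_integral) (auto simp: ennreal_leI)
qed

lemma bounded_imp_orlicz:
  fixes P :: "'b measure" and h :: "'b \<Rightarrow> real"
  assumes P: "prob_space P" and c: "c > 0" and hb: "AE s in P. \<bar>h s\<bar> \<le> c"
  shows "(\<integral>\<^sup>+ s. ennreal (exp ((h s)\<^sup>2 / c\<^sup>2)) \<partial>P) \<le> ennreal (exp 1)"
proof -
  interpret prob_space P by (rule P)
  have "AE s in P. ennreal (exp ((h s)\<^sup>2 / c\<^sup>2)) \<le> ennreal (exp 1)"
    using hb
  proof eventually_elim
    case (elim s)
    then have "(h s)\<^sup>2 \<le> c\<^sup>2" using power_mono[OF elim abs_ge_zero, of 2] by simp
    then show ?case using c by (intro ennreal_leI) simp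
  qed
  then have "(\<integral>\<^sup>+ s. ennreal (exp ((h s)\<^sup>2 / c\<^sup>2)) \<partial>P) \<le> (\<integral>\<^sup>+ s. ennreal (exp 1) \<partial>P)"
    by (rule nn_integral_mono_AE)
  then show ?thesis by (simp add: emeasure_space_1)
qed

subsection \<open>Adapted processes on a finite product of probability spaces\<close>

text \<open>A functional of a sequence depends only on its prefix up to index \<open>k\<close>
  (i.e. it is measurable w.r.t. the first \<open>k + 1\<close> coordinates, in the paper's language).\<close>

definition depends_on_prefix :: "nat \<Rightarrow> ((nat \<Rightarrow> 'b) \<Rightarrow> 'c) \<Rightarrow> bool" where
  "depends_on_prefix k F \<longleftrightarrow> (\<forall>y y'. (\<forall>j\<le>k. y j = y' j) \<longrightarrow> F y = F y')"

lemma depends_on_prefixD: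
  "depends_on_prefix k F \<Longrightarrow> (\<And>j. j \<le> k \<Longrightarrow> y j = y' j) \<Longrightarrow> F y = F y'"
  unfolding depends_on_prefix_def by blast

lemma depends_on_prefix_comp: "depends_on_prefix k F \<Longrightarrow> depends_on_prefix k (\<lambda>y. \<phi> (F y))"
  unfolding depends_on_prefix_def by metis

text \<open>This is the tower property used in every martingale bound below.\<close>

lemma nn_integral_PiM_adapted_prod_le:
  fixes P :: "'b measure" and F :: "nat \<Rightarrow> (nat \<Rightarrow> 'b) \<Rightarrow> ennreal" and c :: "nat \<Rightarrow> ennreal"
  assumes P: "prob_space P"
   and F_meas: "\<And>k m. k < m \<Longrightarrow> F k \<in> borel_measurable (PiM {..<m} (\<lambda>_. P))"
   and F_adapted: "\<And>k. depends_on_prefix k (F k)"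
   and F_cond: "\<And>k x. x \<in> space (PiM {..<k} (\<lambda>_. P)) \<Longrightarrow> (\<integral>\<^sup>+ s. F k (x(k:=s)) \<partial>P) \<le> c k"
  shows "(\<integral>\<^sup>+ y. (\<Prod>k<n. F k y) \<partial>PiM {..<n} (\<lambda>_. P)) \<le> (\<Prod>k<n. c k)"
proof (induction n)
  case 0
  interpret prob_space "PiM {} (\<lambda>_::nat. P)" by (rule prob_space_PiM) (use P in auto)
  show ?case by (simp add: emeasure_space_1)
next
  case (Suc n)
  interpret product_prob_space "\<lambda>_::nat. P"
    by (simp add: product_prob_space_def product_prob_space_axioms_def product_sigma_finite_def
        P prob_space_imp_sigma_finite)
  have split: "{..<Suc n} = insert n {..<n}" by auto
  have split_space: "PiM {..<Suc n} (\<lambda>_. P) = PiM (insert n {..<n}) (\<lambda>_. P)"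
    using split by simp
  have prod_meas: "(\<lambda>y. \<Prod>k<Suc n. F k y) \<in> borel_measurable (PiM (insert n {..<n}) (\<lambda>_. P))"
    using F_meas[of _ "Suc n"] unfolding split[symmetric] by (intro borel_measurable_prod_ennreal) auto
  have "(\<integral>\<^sup>+ y. (\<Prod>k<Suc n. F k y) \<partial>PiM {..<Suc n} (\<lambda>_. P))
      = (\<integral>\<^sup>+ x. (\<integral>\<^sup>+ s. (\<Prod>k<Suc n. F k (x(n:=s))) \<partial>P) \<partial>PiM {..<n} (\<lambda>_. P))"
    unfolding split_space by (rule product_nn_integral_insert[OF _ _ prod_meas]) auto
  also have "\<dots> \<le> (\<integral>\<^sup>+ x. (\<Prod>k<n. F k x) * c n \<partial>PiM {..<n} (\<lambda>_. P))"
  proof (rule nn_integral_mono)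
    fix x assume x: "x \<in> space (PiM {..<n} (\<lambda>_. P))"
    have past: "F k (x(n:=s)) = F k x" if "k < n" for k s
      by (rule depends_on_prefixD[OF F_adapted]) (use that in auto)
    have Fn_meas: "(\<lambda>s. F n (x(n:=s))) \<in> borel_measurable P"
      using measurable_compose[OF measurable_component_update[OF x] F_meas[of n "Suc n", unfolded split]]
      by simp
    have "(\<integral>\<^sup>+ s. (\<Prod>k<Suc n. F k (x(n:=s))) \<partial>P) = (\<Prod>k<n. F k x) * (\<integral>\<^sup>+ s. F n (x(n:=s)) \<partial>P)"
      using past by (simp add: prod.lessThan_Suc nn_integral_cmult[OF Fn_meas])
    also have "\<dots> \<le> (\<Prod>k<n. F k x) * c n"
      by (intro mult_left_mono F_cond x) simp
    finally show "(\<integral>\<^sup>+ s. (\<Prod>k<Suc n. F k (x(n:=s))) \<partial>P) \<le> (\<Prod>k<n. F k x) * c n" .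
  qed
  also have "\<dots> = (\<integral>\<^sup>+ x. (\<Prod>k<n. F k x) \<partial>PiM {..<n} (\<lambda>_. P)) * c n"
    by (rule nn_integral_multc) (use F_meas in \<open>auto intro!: borel_measurable_prod_ennreal\<close>)
  also have "\<dots> \<le> (\<Prod>k<n. c k) * c n"
    by (intro mult_right_mono Suc.IH) simp
  also have "\<dots> = (\<Prod>k<Suc n. c k)" by (simp add: prod.lessThan_Suc)
  finally show ?case .
qed

text \<open>Chernoff's inequality with \<open>t = \<Theta> / (2 \<sigma> \<surd>N)\<close>.\<close>

lemma adapted_sum_tail_bound:
  fixes P :: "'b measure" and h :: "nat \<Rightarrow> (nat \<Rightarrow> 'b) \<Rightarrow> real" and N :: nat
  assumes P: "prob_space P"
   and h_meas: "\<And>k m. k < m \<Longrightarrow> h k \<in> borel_measurable (PiM {..<m} (\<lambda>_. P))"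
   and h_adapted: "\<And>k. depends_on_prefix k (h k)"
   and h_mgf: "\<And>k x t. x \<in> space (PiM {..<k} (\<lambda>_. P)) \<Longrightarrow>
              (\<integral>\<^sup>+ s. ennreal (exp (t * h k (x(k:=s)))) \<partial>P) \<le> ennreal (exp (t\<^sup>2 * \<sigma>\<^sup>2))"
   and \<sigma>: "\<sigma> > 0" and N: "N \<ge> 1" and \<Theta>: "\<Theta> > 0"
  shows "emeasure (PiM {..<N} (\<lambda>_. P)) {y \<in> space (PiM {..<N} (\<lambda>_. P)). \<Theta> * \<sigma> * sqrt N \<le> (\<Sum>k<N. h k y)}
          \<le> ennreal (exp (- \<Theta>\<^sup>2 / 4))"
proof -
  define \<Omega> where "\<Omega> = PiM {..<N} (\<lambda>_. P)"
  define t where "t = \<Theta> / (2 * \<sigma> * sqrt N)"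
  define a where "a = \<Theta> * \<sigma> * sqrt N"
  have sqrtN: "sqrt (real N) > 0" using N by simp
  have t: "t > 0" unfolding t_def using \<sigma> \<Theta> sqrtN by simp
  have sum_meas: "(\<lambda>y. \<Sum>k<N. h k y) \<in> borel_measurable \<Omega>"
    unfolding \<Omega>_def using h_meas by (intro borel_measurable_sum) auto
  have "emeasure \<Omega> {y \<in> space \<Omega>. a \<le> (\<Sum>k<N. h k y)}
     \<le> ennreal (exp (- t * a)) * (\<integral>\<^sup>+ y. ennreal (exp (t * (\<Sum>k<N. h k y))) * indicator (space \<Omega>) y \<partial>\<Omega>)"
    by (rule Chernoff_ineq_nn_integral_ge[OF t]) (use sum_meas in auto)
  also have "(\<integral>\<^sup>+ y. ennreal (exp (t * (\<Sum>k<N. h k y))) * indicator (space \<Omega>) y \<partial>\<Omega>)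
      = (\<integral>\<^sup>+ y. (\<Prod>k<N. ennreal (exp (t * h k y))) \<partial>\<Omega>)"
    by (intro nn_integral_cong) (simp add: exp_sum sum_distrib_left prod_ennreal)
  also have "\<dots> \<le> (\<Prod>k<N. ennreal (exp (t\<^sup>2 * \<sigma>\<^sup>2)))"
    unfolding \<Omega>_def
  proof (rule nn_integral_PiM_adapted_prod_le[OF P])
    show "(\<lambda>y. ennreal (exp (t * h k y))) \<in> borel_measurable (PiM {..<m} (\<lambda>_. P))" if "k < m" for k m
      using h_meas[OF that] by measurable
    show "depends_on_prefix k (\<lambda>y. ennreal (exp (t * h k y)))" for k
      by (rule depends_on_prefix_comp[OF h_adapted])
  qed (rule h_mgf)
  also have "\<dots> = ennreal (exp (N * (t\<^sup>2 * \<sigma>\<^sup>2)))"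
    by (simp add: ennreal_power exp_of_nat_mult)
  finally have "emeasure \<Omega> {y \<in> space \<Omega>. a \<le> (\<Sum>k<N. h k y)}
      \<le> ennreal (exp (- t * a)) * ennreal (exp (N * (t\<^sup>2 * \<sigma>\<^sup>2)))"
    by (simp add: mult_left_mono)
  also have "\<dots> = ennreal (exp (- t * a) * exp (N * (t\<^sup>2 * \<sigma>\<^sup>2)))"
    by (simp add: ennreal_mult)
  also have "exp (- t * a) * exp (N * (t\<^sup>2 * \<sigma>\<^sup>2)) = exp (- t * a + N * (t\<^sup>2 * \<sigma>\<^sup>2))"
    by (simp only: exp_add)
  also have "- t * a + N * (t\<^sup>2 * \<sigma>\<^sup>2) = - \<Theta>\<^sup>2 / 4"
    using \<sigma> sqrtN unfolding t_def a_def by (simp add: field_simps power2_eq_square)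
  finally show ?thesis unfolding \<Omega>_def a_def .
qed

lemma adapted_AE_not:
  fixes P :: "'b measure" and B :: "(nat \<Rightarrow> 'b) \<Rightarrow> bool"
  assumes P: "prob_space P" and kN: "k < N"
   and B_meas: "\<And>m. k < m \<Longrightarrow> Measurable.pred (PiM {..<m} (\<lambda>_. P)) B"
   and B_adapted: "depends_on_prefix k B"
   and B_null: "\<And>x. x \<in> space (PiM {..<k} (\<lambda>_. P)) \<Longrightarrow> AE s in P. \<not> B (x(k:=s))"
  shows "AE y in PiM {..<N} (\<lambda>_. P). \<not> B y"
proof -
  define F where "F j y = (if j = k then (if B y then 1 else 0) else (1::ennreal))" for j y
  define c where "c j = (if j = k then 0 else (1::ennreal))" for j
  have F_prod: "(\<Prod>j<N. F j y) = (if B y then 1 else 0)" for y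
  proof -
    have "(\<Prod>j<N. F j y) = F k y * (\<Prod>j\<in>{..<N} - {k}. F j y)"
      using kN by (subst prod.remove[of _ k]) auto
    also have "(\<Prod>j\<in>{..<N} - {k}. F j y) = 1" by (intro prod.neutral) (auto simp: F_def)
    finally show ?thesis by (simp add: F_def)
  qed
  have "(\<integral>\<^sup>+ y. (\<Prod>j<N. F j y) \<partial>PiM {..<N} (\<lambda>_. P)) \<le> (\<Prod>j<N. c j)"
  proof (rule nn_integral_PiM_adapted_prod_le[OF P])
    show "F j \<in> borel_measurable (PiM {..<m} (\<lambda>_. P))" if "j < m" for j m
      unfolding F_def using B_meas[of m] that by (cases "j = k") auto
    show "depends_on_prefix j (F j)" for j
    proof (cases "j = k")
      case True
      have "F j = (\<lambda>y. if B y then 1 else 0)" using True by (simp add: F_def fun_eq_iff)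
      then show ?thesis using True depends_on_prefix_comp[OF B_adapted] by simp
    qed (simp add: F_def depends_on_prefix_def)
    show "(\<integral>\<^sup>+ s. F j (x(j:=s)) \<partial>P) \<le> c j" if x: "x \<in> space (PiM {..<j} (\<lambda>_. P))" for j x
    proof (cases "j = k")
      case True
      have "(\<integral>\<^sup>+ s. F j (x(j:=s)) \<partial>P) = (\<integral>\<^sup>+ s. 0 \<partial>P)"
        using B_null[of x] x True by (intro nn_integral_cong_AE) (auto simp: F_def elim!: AE_mp)
      then show ?thesis by (simp add: c_def True)
    next
      case False
      interpret prob_space P by (rule P)
      show ?thesis using False by (simp add: F_def c_def emeasure_space_1)
    qed
  qed
  also have "(\<Prod>j<N. c j) = 0" using kN by (auto simp: c_def)
  finally have "(\<integral>\<^sup>+ y. (if B y then 1 else 0) \<partial>PiM {..<N} (\<lambda>_. P)) = 0"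
    by (simp add: F_prod)
  moreover have "(\<lambda>y. if B y then 1 else 0::ennreal) \<in> borel_measurable (PiM {..<N} (\<lambda>_. P))"
    using B_meas[OF kN] by measurable
  ultimately have "AE y in PiM {..<N} (\<lambda>_. P). (if B y then 1 else 0::ennreal) = 0"
    by (simp add: nn_integral_0_iff_AE)
  then show ?thesis by (auto elim!: AE_mp)
qed

subsection \<open>The regret bound for projected subgradient steps\<close>

text \<open>One projected step does not increase the distance to any point of \<open>X\<close> beyond the
  unprojected step; summing the expanded squares telescopes.\<close>

lemma projected_steps_telescope:
  fixes X :: "'a::euclidean_space set" and z v :: "nat \<Rightarrow> 'a"
  assumes X: "convex X" "closed X" "X \<noteq> {}" and xs: "xs \<in> X"
    and z: "\<And>k. z (Suc k) = closest_point X (z k - \<gamma> *\<^sub>R v k)"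
  shows "2 * \<gamma> * (\<Sum>k<n. inner (v k) (z k - xs))
           \<le> (norm (z 0 - xs))\<^sup>2 - (norm (z n - xs))\<^sup>2 + \<gamma>\<^sup>2 * (\<Sum>k<n. (norm (v k))\<^sup>2)"
proof (induction n)
  case 0
  then show ?case by simp
next
  case (Suc n)
  have "norm (z (Suc n) - xs) \<le> norm ((z n - \<gamma> *\<^sub>R v n) - xs)"
    using closest_point_lipschitz[OF X, of "z n - \<gamma> *\<^sub>R v n" xs] closest_point_self[OF xs]
    by (simp add: z dist_norm)
  then have "(norm (z (Suc n) - xs))\<^sup>2 \<le> (norm ((z n - xs) - \<gamma> *\<^sub>R v n))\<^sup>2"
    by (simp add: power_mono algebra_simps)
  also have "\<dots> = (norm (z n - xs))\<^sup>2 - 2 * \<gamma> * inner (v n) (z n - xs) + \<gamma>\<^sup>2 * (norm (v n))\<^sup>2"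
    by (simp only: power2_norm_eq_inner)
       (simp add: inner_diff_left inner_diff_right inner_commute algebra_simps power2_eq_square)
  finally show ?case using Suc.IH by (simp add: algebra_simps)
qed

lemma projected_steps_regret:
  fixes X :: "'a::euclidean_space set" and z v :: "nat \<Rightarrow> 'a"
  assumes X: "convex X" "closed X" and x1: "x1 \<in> X" and xs: "xs \<in> X"
    and D: "\<And>x. x \<in> X \<Longrightarrow> norm (x - x1) \<le> D"
    and z0: "z 0 = x1" and z: "\<And>k. z (Suc k) = closest_point X (z k - \<gamma> *\<^sub>R v k)"
    and v: "\<And>k. k < N \<Longrightarrow> (norm (v k))\<^sup>2 \<le> c" and c: "c > 0" and N: "N \<ge> 1"
    and \<gamma>: "\<gamma> = D / (sqrt c * sqrt N)"
  shows "(\<Sum>k<N. inner (v k) (z k - xs)) \<le> D * sqrt c * sqrt N"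
proof -
  have X_ne: "X \<noteq> {}" using x1 by auto
  have z_in: "z k \<in> X" for k
    by (cases k) (use x1 in \<open>auto simp: z0 z closest_point_in_set[OF X(2) X_ne]\<close>)
  consider "D = 0" | "D > 0" using D[OF x1] by fastforce
  then show ?thesis
  proof cases
    case 1
    then have "z k = xs" for k using D[OF z_in[of k]] D[OF xs] by simp
    then show ?thesis using 1 by simp
  next
    case 2
    have sqrtN: "sqrt N > 0" using N by simp
    have \<gamma>_pos: "\<gamma> > 0" using 2 c sqrtN by (simp add: \<gamma>)
    have start: "(norm (z 0 - xs))\<^sup>2 \<le> D\<^sup>2"
      using D[OF xs] by (intro power_mono) (auto simp: z0 norm_minus_commute)
    have "\<gamma>\<^sup>2 * (\<Sum>k<N. (norm (v k))\<^sup>2) \<le> \<gamma>\<^sup>2 * (N * c)"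
      using sum_mono[of "{..<N}" "\<lambda>k. (norm (v k))\<^sup>2" "\<lambda>_. c"] v by (intro mult_left_mono) auto
    also have "\<gamma>\<^sup>2 * (N * c) = D\<^sup>2"
      using c sqrtN by (simp add: \<gamma> power_mult_distrib power_divide)
    finally have "2 * \<gamma> * (\<Sum>k<N. inner (v k) (z k - xs)) \<le> 2 * D\<^sup>2"
      using projected_steps_telescope[of X xs z \<gamma> v N, OF X X_ne xs z] start
        zero_le_power2[of "norm (z N - xs)"] by linarith
    also have "2 * D\<^sup>2 = 2 * \<gamma> * (D * sqrt c * sqrt N)"
      using c sqrtN by (simp add: \<gamma> power2_eq_square)
    finally show ?thesis using \<gamma>_pos by simp
  qed
qed

lemma (in prob_space) prob_ge_union_bound3:
  assumes events: "A \<in> events" "B1 \<in> events" "B2 \<in> events" "B3 \<in> events"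
    and good: "AE x in M. x \<notin> B1 \<longrightarrow> x \<notin> B2 \<longrightarrow> x \<notin> B3 \<longrightarrow> x \<in> A"
  shows "prob A \<ge> 1 - prob B1 - prob B2 - prob B3"
proof -
  have "prob (space M - (B1 \<union> B2 \<union> B3)) \<le> prob A"
    by (rule finite_measure_mono_AE[OF _ events(1)]) (use good in \<open>auto elim!: AE_mp\<close>)
  moreover have "prob (space M - (B1 \<union> B2 \<union> B3)) = 1 - prob (B1 \<union> B2 \<union> B3)"
    using events by (intro prob_compl) auto
  moreover have "prob (B1 \<union> B2 \<union> B3) \<le> prob B1 + prob B2 + prob B3"
    using measure_Un_le[of "B1 \<union> B2" M B3] measure_Un_le[of B1 M B2] events by auto
  ultimately show ?thesis by linarith
qed

lemma iid_prefix_prob: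
  fixes M :: "'w measure" and S :: "'b measure" and xi :: "nat \<Rightarrow> 'w \<Rightarrow> 'b"
    and \<Psi> :: "(nat \<Rightarrow> 'b) \<Rightarrow> bool"
  assumes M: "prob_space M" and rv: "\<And>i. xi i \<in> measurable M S"
    and indep: "prob_space.indep_vars M (\<lambda>_. S) xi UNIV"
    and ident: "\<And>i. distr M S (xi i) = distr M S (xi 0)" and N: "N \<ge> 1"
    and \<Psi>_meas: "Measurable.pred (PiM {..<N} (\<lambda>_. distr M S (xi 0))) \<Psi>"
    and \<Psi>_prefix: "\<And>y y'. (\<And>j. j < N \<Longrightarrow> y j = y' j) \<Longrightarrow> \<Psi> y = \<Psi> y'"
  shows "measure M {\<omega> \<in> space M. \<Psi> (\<lambda>j. xi j \<omega>)}
       = measure (PiM {..<N} (\<lambda>_. distr M S (xi 0))) {y \<in> space (PiM {..<N} (\<lambda>_. distr M S (xi 0))). \<Psi> y}"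
    (is "_ = measure ?\<Omega> ?A")
proof -
  interpret prob_space M by (rule M)
  define T where "T \<omega> = (\<lambda>i\<in>{..<N}. xi i \<omega>)" for \<omega>
  have "0 \<in> {..<N}" using N by simp
  then have ne: "{..<N} \<noteq> {}" by blast
  have T_meas: "T \<in> measurable M (PiM {..<N} (\<lambda>_. S))"
    unfolding T_def using rv by (intro measurable_restrict) auto
  have sets_eq: "sets (PiM {..<N} (\<lambda>_. S)) = sets ?\<Omega>"
    by (intro sets_PiM_cong) auto
  have law: "distr M (PiM {..<N} (\<lambda>_. S)) T = ?\<Omega>"
  proof -
    have "distr M (PiM {..<N} (\<lambda>_. S)) T = PiM {..<N} (\<lambda>i. distr M S (xi i))"
      using indep_vars_iff_distr_eq_PiM[OF ne, where M'="\<lambda>_. S" and X=xi]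
        indep_vars_subset[OF indep] rv unfolding T_def by auto
    also have "\<dots> = ?\<Omega>" by (rule PiM_cong) (rule refl, rule ident)
    finally show ?thesis .
  qed
  have "{\<omega> \<in> space M. \<Psi> (\<lambda>j. xi j \<omega>)} = T -` ?A \<inter> space M"
  proof -
    have "\<Psi> (\<lambda>j. xi j \<omega>) = \<Psi> (T \<omega>)" for \<omega> by (rule \<Psi>_prefix) (simp add: T_def)
    moreover have "T \<omega> \<in> space ?\<Omega>" if "\<omega> \<in> space M" for \<omega>
      using measurable_space[OF T_meas that] sets_eq_imp_space_eq[OF sets_eq] by simp
    ultimately show ?thesis by auto
  qed
  also have "measure M (T -` ?A \<inter> space M) = measure (distr M (PiM {..<N} (\<lambda>_. S)) T) ?A"
    using T_meas \<Psi>_meas sets_eq by (subst measure_distr) auto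
  finally show ?thesis by (simp add: law)
qed

lemma rsa_iter_prefix:
  assumes "\<And>j. j < k \<Longrightarrow> xi j \<omega> = xi' j \<omega>'"
  shows "rsa_iter X G \<gamma> x1 xi k \<omega> = rsa_iter X G \<gamma> x1 xi' k \<omega>'"
  using assms by (induction k) auto

lemma gN_canonical:
  "gN X g G \<gamma> x1 xi N \<omega> = gN X g G \<gamma> x1 (\<lambda>j y. y j) N (\<lambda>j. xi j \<omega>)"
proof -
  have "rsa_iter X G \<gamma> x1 xi k \<omega> = rsa_iter X G \<gamma> x1 (\<lambda>j y. y j) k (\<lambda>j. xi j \<omega>)" for k
    by (rule rsa_iter_prefix) simp
  then show ?thesis unfolding gN_def by (simp only:)
qed

subsection \<open>RSA on the canonical product space\<close>

locale rsa_canonical =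
  fixes P :: "'b measure" and X :: "'a::euclidean_space set" and G :: "'a \<Rightarrow> 'b \<Rightarrow> 'a"
    and \<gamma> :: real and x1 :: 'a
  assumes prob_P: "prob_space P" and closed_X: "closed X" and convex_X: "convex X"
    and x1_in_X: "x1 \<in> X"
    and G_meas: "(\<lambda>(x, s). G x s) \<in> borel_measurable (borel \<Otimes>\<^sub>M P)"
begin

definition iterate :: "nat \<Rightarrow> (nat \<Rightarrow> 'b) \<Rightarrow> 'a" where
  "iterate k y = rsa_iter X G \<gamma> x1 (\<lambda>j y. y j) k y"

lemma iterate_0: "iterate 0 y = x1"
  and iterate_Suc: "iterate (Suc k) y = closest_point X (iterate k y - \<gamma> *\<^sub>R G (iterate k y) (y k))"
  by (simp_all add: iterate_def)

lemma iterate_in_X: "iterate k y \<in> X"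
proof -
  have "X \<noteq> {}" using x1_in_X by auto
  then show ?thesis
    by (cases k) (auto simp: iterate_0 iterate_Suc x1_in_X closest_point_in_set[OF closed_X])
qed

lemma iterate_prefix: "(\<And>j. j < k \<Longrightarrow> y j = y' j) \<Longrightarrow> iterate k y = iterate k y'"
  unfolding iterate_def by (rule rsa_iter_prefix) simp

text \<open>\<open>x\<^sub>k\<close> is measurable on any product containing the coordinates below \<open>k\<close>, since
  the projection onto \<open>X\<close> is continuous.\<close>

lemma iterate_measurable: "{..<k} \<subseteq> I \<Longrightarrow> iterate k \<in> borel_measurable (PiM I (\<lambda>_. P))"
proof (induction k)
  case 0
  then show ?case by (simp add: iterate_0[abs_def])
next
  case (Suc k)
  then have "{..<k} \<subseteq> I" and kI: "k \<in> I" by auto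
  with Suc.IH have IH: "iterate k \<in> borel_measurable (PiM I (\<lambda>_. P))" by blast
  have "(\<lambda>y. y k) \<in> measurable (PiM I (\<lambda>_. P)) P"
    using kI by (rule measurable_component_singleton)
  then have "(\<lambda>y. G (iterate k y) (y k)) \<in> borel_measurable (PiM I (\<lambda>_. P))"
    using measurable_compose[OF measurable_Pair[OF IH] G_meas] by simp
  then have "(\<lambda>y. iterate k y - \<gamma> *\<^sub>R G (iterate k y) (y k)) \<in> borel_measurable (PiM I (\<lambda>_. P))"
    using IH by measurable
  moreover have "closest_point X \<in> borel_measurable borel"
    using x1_in_X by (intro borel_measurable_continuous_onI continuous_on_closest_point closed_X convex_X) auto
  ultimately show ?case
    unfolding iterate_Suc[abs_def] by (rule measurable_compose)
qed

lemma increment_measurable: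
  assumes "(\<lambda>(x, s). \<phi> x s) \<in> measurable (borel \<Otimes>\<^sub>M P) K" and "k < m"
  shows "(\<lambda>y. \<phi> (iterate k y) (y k)) \<in> measurable (PiM {..<m} (\<lambda>_. P)) K"
proof -
  have "(\<lambda>y. (iterate k y, y k)) \<in> measurable (PiM {..<m} (\<lambda>_. P)) (borel \<Otimes>\<^sub>M P)"
    using \<open>k < m\<close> by (intro measurable_Pair iterate_measurable measurable_component_singleton) auto
  from measurable_compose[OF this assms(1)] show ?thesis by simp
qed

lemma increment_prefix: "depends_on_prefix k (\<lambda>y. \<phi> (iterate k y) (y k))"
  unfolding depends_on_prefix_def
proof (intro allI impI)
  fix y y' :: "nat \<Rightarrow> 'b" assume same: "\<forall>j\<le>k. y j = y' j"
  then have "iterate k y = iterate k y'" by (intro iterate_prefix) auto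
  with same show "\<phi> (iterate k y) (y k) = \<phi> (iterate k y') (y' k)" by simp
qed

lemma iterate_update: "iterate k (y(k := s)) = iterate k y"
  by (rule iterate_prefix) simp

lemma increment_sum_measurable:
  assumes "(\<lambda>(x, s). \<phi> x s) \<in> borel_measurable (borel \<Otimes>\<^sub>M P)"
  shows "(\<lambda>y. \<Sum>k<N. \<phi> (iterate k y) (y k) :: real) \<in> borel_measurable (PiM {..<N} (\<lambda>_. P))"
  by (intro borel_measurable_sum increment_measurable[OF assms]) simp

lemma increments_tail_bound:
  assumes \<phi>_meas: "(\<lambda>(x, s). \<phi> x s) \<in> borel_measurable (borel \<Otimes>\<^sub>M P)"
    and mgf: "\<And>z t. z \<in> X \<Longrightarrow> (\<integral>\<^sup>+ s. ennreal (exp (t * \<phi> z s)) \<partial>P) \<le> ennreal (exp (t\<^sup>2 * \<sigma>\<^sup>2))"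
    and \<sigma>: "\<sigma> > 0" and N: "N \<ge> 1" and \<Theta>: "\<Theta> > 0"
  shows "measure (PiM {..<N} (\<lambda>_. P))
           {y \<in> space (PiM {..<N} (\<lambda>_. P)). \<Theta> * \<sigma> * sqrt N < (\<Sum>k<N. \<phi> (iterate k y) (y k))}
         \<le> exp (- \<Theta>\<^sup>2 / 4)"
proof -
  let ?\<Omega> = "PiM {..<N} (\<lambda>_. P)"
  interpret \<Omega>: prob_space ?\<Omega> by (rule prob_space_PiM) (use prob_P in auto)
  have "emeasure ?\<Omega> {y \<in> space ?\<Omega>. \<Theta> * \<sigma> * sqrt N \<le> (\<Sum>k<N. \<phi> (iterate k y) (y k))}
          \<le> ennreal (exp (- \<Theta>\<^sup>2 / 4))"
  proof (rule adapted_sum_tail_bound[OF prob_P _ increment_prefix _ \<sigma> N \<Theta>])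
    show "(\<lambda>y. \<phi> (iterate k y) (y k)) \<in> borel_measurable (PiM {..<m} (\<lambda>_. P))" if "k < m" for k m
      by (rule increment_measurable[OF \<phi>_meas that])
  qed (simp add: iterate_update mgf iterate_in_X)
  moreover have "emeasure ?\<Omega> {y \<in> space ?\<Omega>. \<Theta> * \<sigma> * sqrt N < (\<Sum>k<N. \<phi> (iterate k y) (y k))}
       \<le> emeasure ?\<Omega> {y \<in> space ?\<Omega>. \<Theta> * \<sigma> * sqrt N \<le> (\<Sum>k<N. \<phi> (iterate k y) (y k))}"
  proof (rule emeasure_mono)
    from increment_sum_measurable[OF \<phi>_meas]
    show "{y \<in> space ?\<Omega>. \<Theta> * \<sigma> * sqrt N \<le> (\<Sum>k<N. \<phi> (iterate k y) (y k))} \<in> sets ?\<Omega>"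
      by measurable
  qed auto
  ultimately show ?thesis
    by (simp add: \<Omega>.emeasure_eq_measure ennreal_le_iff)
qed

lemma increments_AE:
  assumes Q_meas: "Measurable.pred (borel \<Otimes>\<^sub>M P) (\<lambda>(x, s). Q x s)"
    and Q: "\<And>z. z \<in> X \<Longrightarrow> AE s in P. Q z s"
  shows "AE y in PiM {..<N} (\<lambda>_. P). \<forall>k<N. Q (iterate k y) (y k)"
proof -
  have "AE y in PiM {..<N} (\<lambda>_. P). \<not> \<not> Q (iterate k y) (y k)" if k: "k < N" for k
  proof (rule adapted_AE_not[OF prob_P k])
    show "Measurable.pred (PiM {..<m} (\<lambda>_. P)) (\<lambda>y. \<not> Q (iterate k y) (y k))" if "k < m" for m
      using increment_measurable[OF Q_meas that] by measurable
    show "depends_on_prefix k (\<lambda>y. \<not> Q (iterate k y) (y k))"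
      by (rule depends_on_prefix_comp[OF increment_prefix])
  qed (simp add: iterate_update Q iterate_in_X)
  then have "AE y in PiM {..<N} (\<lambda>_. P). \<forall>k\<in>{..<N}. Q (iterate k y) (y k)"
    by (intro AE_ball_countable') auto
  then show ?thesis by eventually_elim auto
qed

end

lemma times_div_sqrt: "0 \<le> x \<Longrightarrow> x * a / sqrt x = a * sqrt x"
  by (metis mult.commute real_div_sqrt times_divide_eq_right times_divide_eq_left)

lemma a_bnd_scaled: "real N * a_bnd \<Theta> M1 N = \<Theta> * M1 * sqrt N"
  unfolding a_bnd_def by (simp add: times_div_sqrt)

lemma b_bnd_dominates:
  assumes DX: "DX \<ge> 0" and M2: "M2 \<ge> 0" and pos: "M2\<^sup>2 + L\<^sup>2 > 0" and \<Theta>: "\<Theta> \<ge> 1" and N: "N \<ge> 1"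
  shows "DX * sqrt (2 * (M2\<^sup>2 + L\<^sup>2)) * sqrt N + \<Theta> * (2 * DX * M2) * sqrt N
           \<le> real N * b_bnd \<Theta> DX M1 M2 L N"
proof -
  define r where "r = sqrt (2 * (M2\<^sup>2 + L\<^sup>2))"
  have r: "r > 0" "r * r = 2 * (M2\<^sup>2 + L\<^sup>2)" using pos by (auto simp: r_def)
  have sqrtN: "sqrt N > 0" "sqrt N * sqrt N = real N" using N by auto
  have K1_plus: "K1 DX M2 L + DX * M2\<^sup>2 / r = DX * r"
  proof -
    have "K1 DX M2 L = DX * (M2\<^sup>2 + 2 * L\<^sup>2) / r" by (simp add: K1_def r_def)
    also have "\<dots> + DX * M2\<^sup>2 / r = DX * (r * r) / r"
      by (simp add: r(2) add_divide_distrib[symmetric] algebra_simps)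
    finally have "K1 DX M2 L + DX * M2\<^sup>2 / r = DX * (r * r) / r" .
    then show ?thesis using r(1) by simp
  qed
  have "DX * M2\<^sup>2 / r \<le> \<Theta> * (DX * M2\<^sup>2 / r)"
    using mult_right_mono[OF \<Theta>, of "DX * M2\<^sup>2 / r"] DX r(1) by simp
  moreover have "\<Theta> * (K2 DX M1 M2 L - M1) = \<Theta> * (DX * M2\<^sup>2 / r) + \<Theta> * (2 * DX * M2)"
    by (simp add: K2_def r_def distrib_left)
  ultimately have "DX * r + \<Theta> * (2 * DX * M2) \<le> K1 DX M2 L + \<Theta> * (K2 DX M1 M2 L - M1)"
    using K1_plus by linarith
  then have "(DX * r + \<Theta> * (2 * DX * M2)) * sqrt N \<le> (K1 DX M2 L + \<Theta> * (K2 DX M1 M2 L - M1)) * sqrt N"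
    using sqrtN(1) by (intro mult_right_mono) auto
  also have "\<dots> = real N * b_bnd \<Theta> DX M1 M2 L N"
    by (simp add: b_bnd_def times_div_sqrt)
  finally show ?thesis by (simp add: r_def algebra_simps)
qed

subsection \<open>The stochastic optimisation problem\<close>

text \<open>Assumptions 1, 2 and 5 of the paper, stated for the sampling distribution \<open>P\<close>, together
  with a minimiser \<open>xs\<close> of \<open>f\<close> on \<open>X\<close> and the constant stepsize of the RSA method.\<close>

locale rsa_problem = rsa_canonical P X G \<gamma> x1
  for P :: "'b measure" and X :: "'a::euclidean_space set" and G \<gamma> x1 +
  fixes g :: "'a \<Rightarrow> 'b \<Rightarrow> real" and f :: "'a \<Rightarrow> real" and f' :: "'a \<Rightarrow> 'a" and xs :: 'a
    and M1 M2 L :: real and N :: nat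
  assumes bounded_X: "bounded X"
    and g_meas: "(\<lambda>(x, s). g x s) \<in> borel_measurable (borel \<Otimes>\<^sub>M P)"
    and g_int: "\<And>x. x \<in> X \<Longrightarrow> integrable P (g x)"
    and G_int: "\<And>x. x \<in> X \<Longrightarrow> integrable P (G x)"
    and f_eq: "\<And>x. x \<in> X \<Longrightarrow> f x = (\<integral>s. g x s \<partial>P)"
    and f'_eq: "\<And>x. x \<in> X \<Longrightarrow> f' x = (\<integral>s. G x s \<partial>P)"
    and f'_subgradient: "\<And>x. x \<in> X \<Longrightarrow> is_subgradient X f x (f' x)"
    and xs_in_X: "xs \<in> X" and xs_min: "\<And>x. x \<in> X \<Longrightarrow> f xs \<le> f x"
    and M1_pos: "M1 > 0" and M2_nonneg: "M2 \<ge> 0" and M2_L_pos: "M2\<^sup>2 + L\<^sup>2 > 0"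
    and f'_bound: "\<And>x. x \<in> X \<Longrightarrow> norm (f' x) \<le> L"
    and value_orlicz: "\<And>x. x \<in> X \<Longrightarrow>
          (\<integral>\<^sup>+ s. ennreal (exp ((g x s - f x)\<^sup>2 / M1\<^sup>2)) \<partial>P) \<le> ennreal (exp 1)"
    and subgrad_dev_bound: "\<And>x. x \<in> X \<Longrightarrow> AE s in P. norm (G x s - f' x) \<le> M2"
    and N_pos: "N \<ge> 1"
    and stepsize: "\<gamma> = rsa_step (diam_from X x1) M2 L N"
begin

abbreviation "\<Omega> \<equiv> PiM {..<N} (\<lambda>_. P)"
abbreviation "DX \<equiv> diam_from X x1"

text \<open>Scale of the subgradient noise \<open>\<langle>f'(x) - G(x, \<xi>), x - x\<^sub>*\<rangle>\<close>.\<close>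

definition noise_radius :: real where "noise_radius = 2 * DX * M2"

text \<open>The two noise terms of the analysis, defined on all of the space via the
  (measurable) expectations.\<close>

definition value_noise :: "'a \<Rightarrow> 'b \<Rightarrow> real" where
  "value_noise z s = g z s - (\<integral>s. g z s \<partial>P)"

definition subgrad_noise :: "'a \<Rightarrow> 'b \<Rightarrow> real" where
  "subgrad_noise z s = inner ((\<integral>s. G z s \<partial>P) - G z s) (z - xs)"

definition covers :: "real \<Rightarrow> real \<Rightarrow> real \<Rightarrow> (nat \<Rightarrow> 'b) \<Rightarrow> bool" where
  "covers \<Theta>1 \<Theta>2 \<Theta>3 y \<longleftrightarrow>
     gN X g G \<gamma> x1 (\<lambda>j y. y j) N y - b_bnd \<Theta>2 DX M1 M2 L N - a_bnd \<Theta>3 M1 N \<le> f xs \<and>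
     f xs \<le> gN X g G \<gamma> x1 (\<lambda>j y. y j) N y + a_bnd \<Theta>1 M1 N"

lemma diam_bound: "x \<in> X \<Longrightarrow> norm (x - x1) \<le> DX"
proof -
  obtain B where B: "\<forall>x\<in>X. norm x \<le> B" using bounded_X by (auto simp: bounded_iff)
  have "norm (x - x1) \<le> B + norm x1" if "x \<in> X" for x
    using B that norm_triangle_ineq4[of x x1] by fastforce
  then have "bdd_above ((\<lambda>x. norm (x - x1)) ` X)" by (intro bdd_aboveI[where M="B + norm x1"]) auto
  then show "x \<in> X \<Longrightarrow> norm (x - x1) \<le> DX" unfolding diam_from_def by (intro cSup_upper) auto
qed

lemma dist_minimiser_le: "x \<in> X \<Longrightarrow> norm (x - xs) \<le> 2 * DX"
  using diam_bound[of x] diam_bound[OF xs_in_X] norm_triangle_ineq4[of "x - x1" "xs - x1"] by simp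

lemma diam_nonneg: "DX \<ge> 0"
  using diam_bound[OF x1_in_X] by simp

lemma noise_radius_nonneg: "noise_radius \<ge> 0"
  using diam_nonneg M2_nonneg by (simp add: noise_radius_def)

lemma value_noise_meas: "(\<lambda>(x, s). value_noise x s) \<in> borel_measurable (borel \<Otimes>\<^sub>M P)"
proof -
  interpret P: prob_space P by (rule prob_P)
  have "(\<lambda>x. \<integral>s. g x s \<partial>P) \<in> borel_measurable borel"
    using P.borel_measurable_lebesgue_integral[OF g_meas] by simp
  then show ?thesis unfolding value_noise_def using g_meas by measurable
qed

lemma mean_subgrad_meas: "(\<lambda>x. \<integral>s. G x s \<partial>P) \<in> borel_measurable borel"
proof -
  interpret P: prob_space P by (rule prob_P)
  show ?thesis using P.borel_measurable_lebesgue_integral[OF G_meas] by simp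
qed

lemma subgrad_noise_meas: "(\<lambda>(x, s). subgrad_noise x s) \<in> borel_measurable (borel \<Otimes>\<^sub>M P)"
  unfolding subgrad_noise_def using mean_subgrad_meas G_meas by measurable

lemma value_noise_mgf:
  assumes z: "z \<in> X"
  shows "(\<integral>\<^sup>+ s. ennreal (exp (t * value_noise z s)) \<partial>P) \<le> ennreal (exp (t\<^sup>2 * M1\<^sup>2))"
proof (rule subgaussian_mgf[OF prob_P _ _ _ M1_pos])
  interpret P: prob_space P by (rule prob_P)
  show "integrable P (value_noise z)" using g_int[OF z] by (simp add: value_noise_def[abs_def])
  then show "value_noise z \<in> borel_measurable P" by auto
  show "integral\<^sup>L P (value_noise z) = 0"
    using g_int[OF z] by (simp add: value_noise_def[abs_def] P.prob_space)
  show "(\<integral>\<^sup>+ s. ennreal (exp ((value_noise z s)\<^sup>2 / M1\<^sup>2)) \<partial>P) \<le> ennreal (exp 1)"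
    using value_orlicz[OF z] f_eq[OF z] by (simp add: value_noise_def)
qed

lemma trajectory_subgrad_dev:
  "AE y in \<Omega>. \<forall>k<N. norm (G (iterate k y) (y k) - f' (iterate k y)) \<le> M2"
proof -
  have "AE y in \<Omega>. \<forall>k<N. norm (G (iterate k y) (y k) - (\<integral>s. G (iterate k y) s \<partial>P)) \<le> M2"
  proof (rule increments_AE)
    show "Measurable.pred (borel \<Otimes>\<^sub>M P) (\<lambda>(x, s). norm (G x s - (\<integral>s. G x s \<partial>P)) \<le> M2)"
      using G_meas mean_subgrad_meas by measurable
  qed (use subgrad_dev_bound f'_eq in auto)
  then show ?thesis by eventually_elim (simp add: f'_eq iterate_in_X)
qed

lemma subgrad_noise_le:
  assumes z: "z \<in> X" and dev: "norm (G z s - f' z) \<le> M2"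
  shows "\<bar>subgrad_noise z s\<bar> \<le> noise_radius"
proof -
  have "\<bar>subgrad_noise z s\<bar> = \<bar>inner (G z s - f' z) (z - xs)\<bar>"
    using f'_eq[OF z] by (simp add: subgrad_noise_def inner_diff_left)
  also have "\<dots> \<le> norm (G z s - f' z) * norm (z - xs)" by (rule Cauchy_Schwarz_ineq2)
  also have "\<dots> \<le> M2 * (2 * DX)" using dev dist_minimiser_le[OF z] M2_nonneg by (intro mult_mono) auto
  finally show ?thesis by (simp add: noise_radius_def mult_ac)
qed

text \<open>The subgradient noise is centred and bounded, hence sub-Gaussian.\<close>

lemma subgrad_noise_mgf:
  assumes z: "z \<in> X" and pos: "noise_radius > 0"
  shows "(\<integral>\<^sup>+ s. ennreal (exp (t * subgrad_noise z s)) \<partial>P) \<le> ennreal (exp (t\<^sup>2 * noise_radius\<^sup>2))"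
proof (rule subgaussian_mgf[OF prob_P _ _ _ pos])
  interpret P: prob_space P by (rule prob_P)
  show int: "integrable P (subgrad_noise z)" using G_int[OF z] by (simp add: subgrad_noise_def[abs_def])
  then show "subgrad_noise z \<in> borel_measurable P" by auto
  show "integral\<^sup>L P (subgrad_noise z) = 0"
    using G_int[OF z] by (simp add: subgrad_noise_def[abs_def] inner_diff_left P.prob_space)
  have "AE s in P. \<bar>subgrad_noise z s\<bar> \<le> noise_radius"
    using subgrad_dev_bound[OF z] by eventually_elim (rule subgrad_noise_le[OF z])
  then show "(\<integral>\<^sup>+ s. ennreal (exp ((subgrad_noise z s)\<^sup>2 / noise_radius\<^sup>2)) \<partial>P) \<le> ennreal (exp 1)"
    by (rule bounded_imp_orlicz[OF prob_P pos])
qed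

lemma value_noise_upper_tail:
  assumes "\<Theta> > 0"
  shows "measure \<Omega> {y \<in> space \<Omega>. \<Theta> * M1 * sqrt N < (\<Sum>k<N. value_noise (iterate k y) (y k))}
           \<le> exp (- \<Theta>\<^sup>2 / 4)"
  by (rule increments_tail_bound[OF value_noise_meas value_noise_mgf M1_pos N_pos assms])

lemma value_noise_lower_tail:
  assumes "\<Theta> > 0"
  shows "measure \<Omega> {y \<in> space \<Omega>. \<Theta> * M1 * sqrt N < (\<Sum>k<N. - value_noise (iterate k y) (y k))}
           \<le> exp (- \<Theta>\<^sup>2 / 4)"
proof (rule increments_tail_bound[OF _ _ M1_pos N_pos assms])
  show "(\<lambda>(x, s). - value_noise x s) \<in> borel_measurable (borel \<Otimes>\<^sub>M P)"
    using value_noise_meas by measurable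
  show "(\<integral>\<^sup>+ s. ennreal (exp (t * - value_noise z s)) \<partial>P) \<le> ennreal (exp (t\<^sup>2 * M1\<^sup>2))"
    if "z \<in> X" for z t
    using value_noise_mgf[OF that, of "- t"] by simp
qed

text \<open>If \<open>noise_radius = 0\<close> the subgradient noise vanishes almost surely, so the bound
  holds trivially; otherwise it is the Azuma bound.\<close>

lemma subgrad_noise_tail:
  assumes "\<Theta> > 0"
  shows "measure \<Omega> {y \<in> space \<Omega>. \<Theta> * noise_radius * sqrt N < (\<Sum>k<N. subgrad_noise (iterate k y) (y k))}
           \<le> exp (- \<Theta>\<^sup>2 / 4)"
proof (cases "noise_radius > 0")
  case True
  show ?thesis
    by (rule increments_tail_bound[OF subgrad_noise_meas subgrad_noise_mgf[OF _ True] True N_pos assms])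
next
  case False
  then have zero: "noise_radius = 0" using noise_radius_nonneg by simp
  interpret \<Omega>: prob_space \<Omega> by (rule prob_space_PiM) (use prob_P in auto)
  have nonpos: "AE y in \<Omega>. (\<Sum>k<N. subgrad_noise (iterate k y) (y k)) \<le> 0"
    using trajectory_subgrad_dev
  proof eventually_elim
    case (elim y)
    then have "subgrad_noise (iterate k y) (y k) \<le> 0" if "k < N" for k
      using subgrad_noise_le[OF iterate_in_X, of k y "y k"] that zero by simp
    then show ?case by (intro sum_nonpos) auto
  qed
  have "measure \<Omega> {y \<in> space \<Omega>. \<Theta> * noise_radius * sqrt N < (\<Sum>k<N. subgrad_noise (iterate k y) (y k))}
               \<le> 0"
  proof -
    have "AE y in \<Omega>. y \<notin> {y \<in> space \<Omega>. \<Theta> * noise_radius * sqrt N < (\<Sum>k<N. subgrad_noise (iterate k y) (y k))}"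
      using nonpos by eventually_elim (auto simp: zero)
    then show ?thesis using \<Omega>.finite_measure_mono_AE[of _ "{}"] by simp
  qed
  then show ?thesis by (meson exp_ge_zero order_trans)
qed

text \<open>Optimality gap of the iterates: by the subgradient inequality and the regret bound for
  projected steps, the gap is at most the optimisation error plus the subgradient noise.\<close>

lemma optimality_gap:
  assumes dev: "\<And>k. k < N \<Longrightarrow> norm (G (iterate k y) (y k) - f' (iterate k y)) \<le> M2"
  shows "(\<Sum>k<N. f (iterate k y) - f xs)
           \<le> DX * sqrt (2 * (M2\<^sup>2 + L\<^sup>2)) * sqrt N + (\<Sum>k<N. subgrad_noise (iterate k y) (y k))"
proof -
  define z where "z k = iterate k y" for k
  define v where "v k = G (z k) (y k)" for k
  have step_sq: "(norm (v k))\<^sup>2 \<le> 2 * (M2\<^sup>2 + L\<^sup>2)" if "k < N" for k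
  proof -
    have "norm (v k) \<le> norm (f' (z k)) + norm (v k - f' (z k))"
      using norm_triangle_ineq[of "f' (z k)" "v k - f' (z k)"] by simp
    also have "\<dots> \<le> L + M2"
      unfolding z_def v_def by (rule add_mono[OF f'_bound[OF iterate_in_X] dev[OF that]])
    finally have "(norm (v k))\<^sup>2 \<le> (L + M2)\<^sup>2" by (intro power_mono) auto
    also have "\<dots> \<le> 2 * (M2\<^sup>2 + L\<^sup>2)" using zero_le_power2[of "L - M2"] by (simp add: power2_eq_square algebra_simps)
    finally show ?thesis .
  qed
  have \<gamma>_eq: "\<gamma> = DX / (sqrt (2 * (M2\<^sup>2 + L\<^sup>2)) * sqrt N)"
    by (simp add: stepsize rsa_step_def)
  have regret: "(\<Sum>k<N. inner (v k) (z k - xs)) \<le> DX * sqrt (2 * (M2\<^sup>2 + L\<^sup>2)) * sqrt N"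
    by (rule projected_steps_regret[OF convex_X closed_X x1_in_X xs_in_X diam_bound _ _ step_sq
          _ N_pos \<gamma>_eq]) (use M2_L_pos in \<open>auto simp: z_def v_def iterate_0 iterate_Suc\<close>)
  have gap_k: "f (z k) - f xs \<le> inner (v k) (z k - xs) + subgrad_noise (z k) (y k)" for k
  proof -
    have "f xs \<ge> f (z k) + inner (f' (z k)) (xs - z k)"
      using f'_subgradient[OF iterate_in_X] xs_in_X by (auto simp: is_subgradient_def z_def)
    moreover have "inner (v k) (z k - xs) + subgrad_noise (z k) (y k) = inner (f' (z k)) (z k - xs)"
      using f'_eq[OF iterate_in_X] by (simp add: subgrad_noise_def v_def z_def inner_diff_left)
    ultimately show ?thesis by (simp add: inner_diff_right)
  qed
  have "(\<Sum>k<N. f (z k) - f xs) \<le> (\<Sum>k<N. inner (v k) (z k - xs)) + (\<Sum>k<N. subgrad_noise (z k) (y k))"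
    unfolding sum.distrib[symmetric] by (intro sum_mono gap_k)
  then show ?thesis using regret by (simp add: z_def)
qed

lemma gN_iterate: "gN X g G \<gamma> x1 (\<lambda>j y. y j) N y = (\<Sum>k<N. g (iterate k y) (y k)) / N"
  by (simp add: gN_def iterate_def)

lemma covers_if_small_noise:
  assumes \<Theta>2: "\<Theta>2 \<ge> 1"
    and dev: "\<And>k. k < N \<Longrightarrow> norm (G (iterate k y) (y k) - f' (iterate k y)) \<le> M2"
    and low: "(\<Sum>k<N. - value_noise (iterate k y) (y k)) \<le> \<Theta>1 * M1 * sqrt N"
    and up: "(\<Sum>k<N. value_noise (iterate k y) (y k)) \<le> \<Theta>3 * M1 * sqrt N"
    and sub: "(\<Sum>k<N. subgrad_noise (iterate k y) (y k)) \<le> \<Theta>2 * noise_radius * sqrt N"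
  shows "covers \<Theta>1 \<Theta>2 \<Theta>3 y"
proof -
  define S where "S = (\<Sum>k<N. g (iterate k y) (y k))"
  define F where "F = (\<Sum>k<N. f (iterate k y))"
  have S_split: "S = F + (\<Sum>k<N. value_noise (iterate k y) (y k))"
    using f_eq[OF iterate_in_X] by (simp add: S_def F_def value_noise_def sum_subtractf)
  have F_ge: "N * f xs \<le> F"
    using sum_mono[of "{..<N}" "\<lambda>_. f xs"] xs_min[OF iterate_in_X] by (simp add: F_def)
  have "F - N * f xs \<le> DX * sqrt (2 * (M2\<^sup>2 + L\<^sup>2)) * sqrt N + \<Theta>2 * noise_radius * sqrt N"
    using optimality_gap[OF dev] sub by (simp add: F_def sum_subtractf)
  also have "\<dots> \<le> N * b_bnd \<Theta>2 DX M1 M2 L N"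
    unfolding noise_radius_def by (rule b_bnd_dominates[OF diam_nonneg M2_nonneg M2_L_pos \<Theta>2 N_pos])
  finally have upper: "S \<le> N * (f xs + b_bnd \<Theta>2 DX M1 M2 L N + a_bnd \<Theta>3 M1 N)"
    using S_split up a_bnd_scaled[of N \<Theta>3 M1] by (simp add: algebra_simps)
  have lower: "N * (f xs - a_bnd \<Theta>1 M1 N) \<le> S"
    using S_split F_ge low a_bnd_scaled[of N \<Theta>1 M1] by (simp add: algebra_simps sum_negf)
  have "real N > 0" using N_pos by simp
  with upper lower show ?thesis
    by (simp add: covers_def gN_iterate flip: S_def) (simp add: field_simps)
qed

lemma covers_measurable: "Measurable.pred \<Omega> (covers \<Theta>1 \<Theta>2 \<Theta>3)"
proof -
  have "(\<lambda>y. \<Sum>k<N. g (iterate k y) (y k)) \<in> borel_measurable \<Omega>"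
    by (rule increment_sum_measurable[OF g_meas])
  then show ?thesis unfolding covers_def[abs_def] gN_iterate by measurable
qed

lemma covers_prefix:
  assumes "\<And>j. j < N \<Longrightarrow> y j = y' j"
  shows "covers \<Theta>1 \<Theta>2 \<Theta>3 y = covers \<Theta>1 \<Theta>2 \<Theta>3 y'"
proof -
  have "iterate k y = iterate k y'" if "k < N" for k
    using assms that by (intro iterate_prefix) auto
  then have "(\<Sum>k<N. g (iterate k y) (y k)) = (\<Sum>k<N. g (iterate k y') (y' k))"
    using assms by (intro sum.cong) auto
  then show ?thesis by (simp add: covers_def gN_iterate)
qed

text \<open>The confidence statement on the canonical space: union bound over the three noise
  events, the subgradient-error null set being absorbed by the almost-sure formulation.\<close>

theorem confidence_canonical:
  assumes \<Theta>: "\<Theta>1 > 0" "\<Theta>2 > 0" "\<Theta>3 > 0"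
  shows "measure \<Omega> {y \<in> space \<Omega>. covers \<Theta>1 \<Theta>2 \<Theta>3 y}
           \<ge> 1 - exp (- \<Theta>1\<^sup>2 / 4) - exp (1 - \<Theta>2\<^sup>2) - exp (- \<Theta>2\<^sup>2 / 4) - exp (- \<Theta>3\<^sup>2 / 4)"
proof (cases "\<Theta>2 \<ge> 1")
  case False
  \<comment> \<open>then \<open>exp (1 - \<Theta>2\<^sup>2) > 1\<close> and the claimed lower bound is negative\<close>
  then have "\<Theta>2\<^sup>2 < 1" using \<Theta>(2) by (simp add: power_less_one_iff abs_less_iff)
  then have "1 \<le> exp (1 - \<Theta>2\<^sup>2)" by simp
  then show ?thesis using exp_gt_zero[of "- \<Theta>1\<^sup>2 / 4"] exp_gt_zero[of "- \<Theta>2\<^sup>2 / 4"]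
      exp_gt_zero[of "- \<Theta>3\<^sup>2 / 4"] measure_nonneg[of \<Omega> "{y \<in> space \<Omega>. covers \<Theta>1 \<Theta>2 \<Theta>3 y}"] by linarith
next
  case True
  interpret \<Omega>: prob_space \<Omega> by (rule prob_space_PiM) (use prob_P in auto)
  define low where "low = {y \<in> space \<Omega>. \<Theta>1 * M1 * sqrt N < (\<Sum>k<N. - value_noise (iterate k y) (y k))}"
  define sub where "sub = {y \<in> space \<Omega>. \<Theta>2 * noise_radius * sqrt N < (\<Sum>k<N. subgrad_noise (iterate k y) (y k))}"
  define up where "up = {y \<in> space \<Omega>. \<Theta>3 * M1 * sqrt N < (\<Sum>k<N. value_noise (iterate k y) (y k))}"
  have "measure \<Omega> {y \<in> space \<Omega>. covers \<Theta>1 \<Theta>2 \<Theta>3 y} \<ge> 1 - measure \<Omega> low - measure \<Omega> sub - measure \<Omega> up"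
  proof (rule \<Omega>.prob_ge_union_bound3)
    have "(\<lambda>(x, s). - value_noise x s) \<in> borel_measurable (borel \<Otimes>\<^sub>M P)"
      using value_noise_meas by measurable
    note sums = this[THEN increment_sum_measurable] value_noise_meas[THEN increment_sum_measurable]
      subgrad_noise_meas[THEN increment_sum_measurable]
    show "low \<in> \<Omega>.events" "sub \<in> \<Omega>.events" "up \<in> \<Omega>.events"
      unfolding low_def sub_def up_def using sums by measurable
    show "{y \<in> space \<Omega>. covers \<Theta>1 \<Theta>2 \<Theta>3 y} \<in> \<Omega>.events"
      using covers_measurable by measurable
    show "AE y in \<Omega>. y \<notin> low \<longrightarrow> y \<notin> sub \<longrightarrow> y \<notin> up \<longrightarrow> y \<in> {y \<in> space \<Omega>. covers \<Theta>1 \<Theta>2 \<Theta>3 y}"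
      using trajectory_subgrad_dev AE_space
    proof eventually_elim
      case (elim y)
      show ?case
      proof (intro impI)
        assume "y \<notin> low" "y \<notin> sub" "y \<notin> up"
        with elim have "covers \<Theta>1 \<Theta>2 \<Theta>3 y"
          by (intro covers_if_small_noise[OF True]) (auto simp: low_def sub_def up_def not_less)
        with elim show "y \<in> {y \<in> space \<Omega>. covers \<Theta>1 \<Theta>2 \<Theta>3 y}" by simp
      qed
    qed
  qed
  then show ?thesis
    using value_noise_lower_tail[OF \<Theta>(1)] subgrad_noise_tail[OF \<Theta>(2)] value_noise_upper_tail[OF \<Theta>(3)]
      exp_ge_zero[of "1 - \<Theta>2\<^sup>2"] unfolding low_def sub_def up_def by linarith
qed

end

theorem corollary1:
  fixes M :: "'w measure" and S :: "'b measure"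
    and xi :: "nat \<Rightarrow> 'w \<Rightarrow> 'b"
    and X :: "'a::euclidean_space set"
    and g :: "'a \<Rightarrow> 'b \<Rightarrow> real" and G :: "'a \<Rightarrow> 'b \<Rightarrow> 'a"
    and f :: "'a \<Rightarrow> real" and f' :: "'a \<Rightarrow> 'a"
    and x1 xs :: 'a and L M1 M2 \<Theta>1 \<Theta>2 \<Theta>3 :: real and N :: nat
  defines "P \<equiv> distr M S (xi 0)"
  defines "DX \<equiv> diam_from X x1"
  defines "\<gamma> \<equiv> rsa_step DX M2 L N"
  assumes prob: "prob_space M"
    and rv: "\<And>i. xi i \<in> measurable M S"
    and indep: "prob_space.indep_vars M (\<lambda>_. S) xi UNIV"
    and ident: "\<And>i. distr M S (xi i) = distr M S (xi 0)"
    and X: "X \<noteq> {}" "closed X" "bounded X" "convex X" and x1: "x1 \<in> X"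
    and g_meas: "(\<lambda>(x, s). g x s) \<in> borel_measurable (borel \<Otimes>\<^sub>M S)"
    and G_meas: "(\<lambda>(x, s). G x s) \<in> borel_measurable (borel \<Otimes>\<^sub>M S)"
    and g_conv: "\<And>s. s \<in> space S \<Longrightarrow> convex_on X (\<lambda>x. g x s)"
    and G_sub: "\<And>x s. x \<in> X \<Longrightarrow> s \<in> space S \<Longrightarrow> is_subgradient X (\<lambda>y. g y s) x (G x s)"
    and g_int: "\<And>x. x \<in> X \<Longrightarrow> integrable P (g x)"
    and G_int: "\<And>x. x \<in> X \<Longrightarrow> integrable P (G x)"
    and f_def: "\<And>x. x \<in> X \<Longrightarrow> f x = (\<integral>s. g x s \<partial>P)"
    and f'_def: "\<And>x. x \<in> X \<Longrightarrow> f' x = (\<integral>s. G x s \<partial>P)"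
    and f'_sub: "\<And>x. x \<in> X \<Longrightarrow> is_subgradient X f x (f' x)"
    and f_conv: "convex_on X f"
    and f_lip: "\<exists>C. C-lipschitz_on X f"
    and xs: "xs \<in> X" "\<And>x. x \<in> X \<Longrightarrow> f xs \<le> f x"
    and M1_pos: "M1 > 0" and M2_nn: "M2 \<ge> 0" and L_nn: "L \<ge> 0" and sq_pos: "M2\<^sup>2 + L\<^sup>2 > 0"
    and A1: "\<And>x. x \<in> X \<Longrightarrow> norm (f' x) \<le> L"
    and A3a: "\<And>x. x \<in> X \<Longrightarrow> (\<integral>\<^sup>+ s. ennreal ((g x s - f x)\<^sup>2) \<partial>P) \<le> ennreal (M1\<^sup>2)"
    and A3b: "\<And>x. x \<in> X \<Longrightarrow> (\<integral>\<^sup>+ s. ennreal ((norm (G x s - f' x))\<^sup>2) \<partial>P) \<le> ennreal (M2\<^sup>2)"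
    and A5a: "\<And>x. x \<in> X \<Longrightarrow> (\<integral>\<^sup>+ s. ennreal (exp ((g x s - f x)\<^sup>2 / M1\<^sup>2)) \<partial>P) \<le> ennreal (exp 1)"
    and A5b: "\<And>x. x \<in> X \<Longrightarrow> (AE s in P. norm (G x s - f' x) \<le> M2)"
    and N: "N \<ge> 1"
    and \<Theta>: "\<Theta>1 > 0" "\<Theta>2 > 0" "\<Theta>3 > 0"
  shows "measure M {\<omega> \<in> space M.
            gN X g G \<gamma> x1 xi N \<omega> - b_bnd \<Theta>2 DX M1 M2 L N - a_bnd \<Theta>3 M1 N \<le> f xs \<and>
            f xs \<le> gN X g G \<gamma> x1 xi N \<omega> + a_bnd \<Theta>1 M1 N}
         \<ge> 1 - exp (- \<Theta>1\<^sup>2 / 4) - exp (1 - \<Theta>2\<^sup>2) - exp (- \<Theta>2\<^sup>2 / 4) - exp (- \<Theta>3\<^sup>2 / 4)"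
proof -
  interpret M: prob_space M by (rule prob)
  have sets_P: "sets P = sets S" unfolding P_def by simp
  have to_P: "(\<lambda>(x, s). h x s) \<in> borel_measurable (borel \<Otimes>\<^sub>M P)"
    if "(\<lambda>(x, s). h x s) \<in> borel_measurable (borel \<Otimes>\<^sub>M S)" for h :: "'a \<Rightarrow> 'b \<Rightarrow> 'c::topological_space"
    using that by (subst measurable_cong_sets[OF sets_pair_measure_cong[OF refl sets_P] refl])
  have P_prob: "prob_space P" unfolding P_def by (rule M.prob_space_distr[OF rv])
  have \<gamma>_eq: "\<gamma> = rsa_step (diam_from X x1) M2 L N" by (simp add: \<gamma>_def DX_def)
  interpret rsa_problem P X G \<gamma> x1 g f f' xs M1 M2 L N
    unfolding rsa_problem_def rsa_canonical_def rsa_problem_axioms_def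
    using P_prob \<gamma>_eq X x1 g_int G_int f_def f'_def f'_sub xs M1_pos M2_nn sq_pos
      A1 A5a A5b N to_P[OF G_meas] to_P[OF g_meas] by blast
  have "measure M {\<omega> \<in> space M. covers \<Theta>1 \<Theta>2 \<Theta>3 (\<lambda>j. xi j \<omega>)}
      = measure \<Omega> {y \<in> space \<Omega>. covers \<Theta>1 \<Theta>2 \<Theta>3 y}"
    unfolding P_def by (rule iid_prefix_prob[OF prob rv indep ident N covers_measurable[unfolded P_def]
        covers_prefix])
  then show ?thesis
    using confidence_canonical[OF \<Theta>] by (simp add: covers_def DX_def gN_canonical[symmetric])
qed

end
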